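(* Let $n\geq 4$ and let $\nu :B_n\to GL_{n+1}(\mathbb{C})$ be a non-trivial homogeneous $3$-local representation of $B_n$. Then $\nu$ is equivalent to one of the eight representations $\nu_j$, $1\leq j\leq 8$, given by $\nu_j(\sigma_i)=\mathrm{diag}(I_{i-1},M_j,I_{n-i-1})$ for all $1\leq i \leq n-1$, where: (1) $M_1=\begin{pmatrix} 1&0&0\\ 0&m_{22}&m_{23}\\ 0&\frac{1-m_{22}}{m_{23}}&0\end{pmatrix}$, with $m_{22}\neq1$, $m_{23}\neq0$; (2) $M_2=\begin{pmatrix} 0&m_{12}&0\\ \frac{1-m_{22}}{m_{12}}&m_{22}&0\\ 0&0&1\end{pmatrix}$, with $m_{22}\neq1$, $m_{12}\neq0$; (3) $M_3=\begin{pmatrix} 1&-\frac{m_{22}}{m_{32}}&0\\ 0&m_{22}&0\\ 0&m_{32}&1\end{pmatrix}$, with $m_{22}m_{32}\neq0$; (4) $M_4=\begin{pmatrix} 1&0&0\\ -\frac{m_{22}}{m_{23}}&m_{22}&m_{23}\\ 0&0&1\end{pmatrix}$, with $m_{23}m_{22}\neq0$; (5) $M_5=\begin{pmatrix} 1&0&0\\ 0&0&m_{23}\\ 0&m_{32}&1-m_{23}m_{32}\end{pmatrix}$, with $m_{23}m_{32}\neq0$; (6) $M_6=\begin{pmatrix} 1-m_{12}m_{21}&m_{12}&0\\ m_{21}&0&0\\ 0&0&1\end{pmatrix}$, with $m_{12}m_{21}\neq0$; (7) $M_7=\begin{pmatrix} 1&0&0\\ 0&0&m_{23}\\ 0&m_{32}&0\end{pmatrix}$,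 with $m_{23}m_{32}\neq0$; (8) $M_8=\begin{pmatrix} 0&m_{12}&0\\ m_{21}&0&0\\ 0&0&1\end{pmatrix}$, with $m_{12}m_{21}\neq0$; all entries being complex numbers.
   Context: The braid group $B_n$ has generators $\sigma_1,\dots,\sigma_{n-1}$ with relations $\sigma_i\sigma_{i+1}\sigma_i=\sigma_{i+1}\sigma_i\sigma_{i+1}$ ($1\le i\le n-2$) and $\sigma_i\sigma_j=\sigma_j\sigma_i$ ($|i-j|\ge2$). A representation $\nu:B_n\to GL_{n+1}(\mathbb{C})$ is homogeneous $3$-local if there is a matrix $M\in M_3(\mathbb{C})$ with $\nu(\sigma_i)=\mathrm{diag}(I_{i-1},M,I_{n-i-1})$ (block diagonal, $I_r$ the $r\times r$ identity) for all $1\le i\le n-1$. "Non-trivial" means not sending every $\sigma_i$ to the identity. Two representations are equivalent if they are conjugate by a fixed invertible matrix. *)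

theory Defs
  imports Complex_Main "Jordan_Normal_Form.Matrix"
begin

text \<open>A representation of the braid group B_n into GL_{n+1}(C) is recorded by the images
  nu i of the standard generators sigma_i (1 <= i <= n-1).  By the presentation of B_n,
  an assignment of matrices to the generators extends to a homomorphism iff the images are
  invertible and satisfy the braid relations.\<close>

definition braid_rep :: "nat \<Rightarrow> (nat \<Rightarrow> complex mat) \<Rightarrow> bool" where
  "braid_rep n nu \<longleftrightarrow>
     (\<forall>i\<in>{1..n-1}. nu i \<in> carrier_mat (n+1) (n+1) \<and> invertible_mat (nu i)) \<and>
     (\<forall>i\<in>{1..n-2}. nu i * nu (i+1) * nu i = nu (i+1) * nu i * nu (i+1)) \<and>
     (\<forall>i\<in>{1..n-1}. \<forall>j\<in>{1..n-1}. (i + 2 \<le> j \<or> j + 2 \<le> i) \<longrightarrow> nu i * nu j = nu j * nu i)"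

text \<open>diag(I_{i-1}, M, I_{n-i-1}) as an (n+1)x(n+1) matrix (0-based rows/cols i-1, i, i+1
  carry the block M).\<close>
definition local_mat :: "nat \<Rightarrow> complex mat \<Rightarrow> nat \<Rightarrow> complex mat" where
  "local_mat n M i = mat (n+1) (n+1) (\<lambda>(r,c).
     if i - 1 \<le> r \<and> r \<le> i + 1 \<and> i - 1 \<le> c \<and> c \<le> i + 1
     then M $$ (r - (i - 1), c - (i - 1))
     else (if r = c then 1 else 0))"

definition homogeneous_3_local :: "nat \<Rightarrow> (nat \<Rightarrow> complex mat) \<Rightarrow> bool" where
  "homogeneous_3_local n nu \<longleftrightarrow>
     (\<exists>M \<in> carrier_mat 3 3. \<forall>i\<in>{1..n-1}. nu i = local_mat n M i)"

definition nontrivial_rep :: "nat \<Rightarrow> (nat \<Rightarrow> complex mat) \<Rightarrow> bool" where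
  "nontrivial_rep n nu \<longleftrightarrow> (\<exists>i\<in>{1..n-1}. nu i \<noteq> 1\<^sub>m (n+1))"

definition equiv_rep :: "nat \<Rightarrow> (nat \<Rightarrow> complex mat) \<Rightarrow> (nat \<Rightarrow> complex mat) \<Rightarrow> bool" where
  "equiv_rep n nu mu \<longleftrightarrow>
     (\<exists>P Q. P \<in> carrier_mat (n+1) (n+1) \<and> Q \<in> carrier_mat (n+1) (n+1) \<and>
        P * Q = 1\<^sub>m (n+1) \<and> Q * P = 1\<^sub>m (n+1) \<and>
        (\<forall>i\<in>{1..n-1}. mu i = P * nu i * Q))"

definition M1 :: "complex \<Rightarrow> complex \<Rightarrow> complex mat" where
  "M1 m22 m23 = mat_of_rows_list 3 [[1,0,0],[0,m22,m23],[0,(1-m22)/m23,0]]"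
definition M2 :: "complex \<Rightarrow> complex \<Rightarrow> complex mat" where
  "M2 m22 m12 = mat_of_rows_list 3 [[0,m12,0],[(1-m22)/m12,m22,0],[0,0,1]]"
definition M3 :: "complex \<Rightarrow> complex \<Rightarrow> complex mat" where
  "M3 m22 m32 = mat_of_rows_list 3 [[1,-(m22/m32),0],[0,m22,0],[0,m32,1]]"
definition M4 :: "complex \<Rightarrow> complex \<Rightarrow> complex mat" where
  "M4 m22 m23 = mat_of_rows_list 3 [[1,0,0],[-(m22/m23),m22,m23],[0,0,1]]"
definition M5 :: "complex \<Rightarrow> complex \<Rightarrow> complex mat" where
  "M5 m23 m32 = mat_of_rows_list 3 [[1,0,0],[0,0,m23],[0,m32,1-m23*m32]]"
definition M6 :: "complex \<Rightarrow> complex \<Rightarrow> complex mat" where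
  "M6 m12 m21 = mat_of_rows_list 3 [[1-m12*m21,m12,0],[m21,0,0],[0,0,1]]"
definition M7 :: "complex \<Rightarrow> complex \<Rightarrow> complex mat" where
  "M7 m23 m32 = mat_of_rows_list 3 [[1,0,0],[0,0,m23],[0,m32,0]]"
definition M8 :: "complex \<Rightarrow> complex \<Rightarrow> complex mat" where
  "M8 m12 m21 = mat_of_rows_list 3 [[0,m12,0],[m21,0,0],[0,0,1]]"

definition standard_blocks :: "complex mat set" where
  "standard_blocks =
     {M1 m22 m23 | m22 m23. m22 \<noteq> 1 \<and> m23 \<noteq> 0} \<union>
     {M2 m22 m12 | m22 m12. m22 \<noteq> 1 \<and> m12 \<noteq> 0} \<union>
     {M3 m22 m32 | m22 m32. m22 * m32 \<noteq> 0} \<union>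
     {M4 m22 m23 | m22 m23. m23 * m22 \<noteq> 0} \<union>
     {M5 m23 m32 | m23 m32. m23 * m32 \<noteq> 0} \<union>
     {M6 m12 m21 | m12 m21. m12 * m21 \<noteq> 0} \<union>
     {M7 m23 m32 | m23 m32. m23 * m32 \<noteq> 0} \<union>
     {M8 m12 m21 | m12 m21. m12 * m21 \<noteq> 0}"

end

theory Submission
  imports Defs
begin

(* The far commutation relation sigma_1 sigma_3 = sigma_3 sigma_1, available since n >= 4,
   forces the corner entries m13 and m31 of the block M to vanish and yields five quadratic
   relations; the braid relation sigma_1 sigma_2 sigma_1 = sigma_2 sigma_1 sigma_2, read off
   on the leading 4x4 corner, yields eight cubic ones.  Invertibility forbids zero rows and
   columns of M, and non-triviality excludes M = I.  A case split on whether m23 and m32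
   vanish then solves these equations: M itself is one of the blocks M_1, ..., M_8, so nu
   is even equal to some nu_j (conjugate by the identity). *)

abbreviation mat3 :: "'a \<Rightarrow> 'a \<Rightarrow> 'a \<Rightarrow> 'a \<Rightarrow> 'a \<Rightarrow> 'a \<Rightarrow> 'a \<Rightarrow> 'a \<Rightarrow> 'a \<Rightarrow> 'a mat" where
  "mat3 m11 m12 m13 m21 m22 m23 m31 m32 m33 \<equiv>
     mat_of_rows_list 3 [[m11, m12, m13], [m21, m22, m23], [m31, m32, m33]]"

lemma carrier_mat_3_3_cases:
  assumes "M \<in> carrier_mat 3 3"
  obtains m11 m12 m13 m21 m22 m23 m31 m32 m33
    where "M = mat3 m11 m12 m13 m21 m22 m23 m31 m32 m33"
proof
  show "M = mat3 (M $$ (0,0)) (M $$ (0,1)) (M $$ (0,2)) (M $$ (1,0)) (M $$ (1,1)) (M $$ (1,2))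
               (M $$ (2,0)) (M $$ (2,1)) (M $$ (2,2))"
    by (rule eq_matI) (use assms in \<open>auto simp: mat_of_rows_list_def less_Suc_eq numeral_eq_Suc\<close>)
qed

lemma mat3_one: "mat3 1 0 0 0 1 0 0 0 1 = (1\<^sub>m 3 :: 'a :: semiring_1 mat)"
  by (rule eq_matI) (auto simp: mat_of_rows_list_def less_Suc_eq numeral_eq_Suc)

lemma index_mult_mat_truncated:
  assumes "A \<in> carrier_mat nr N" "B \<in> carrier_mat N nc" "r < nr" "c < nc" "m \<le> N"
    and "\<And>l. m \<le> l \<Longrightarrow> l < N \<Longrightarrow> A $$ (r,l) * B $$ (l,c) = 0"
  shows "(A * B) $$ (r,c) = (\<Sum>l<m. A $$ (r,l) * B $$ (l,c))"
proof -
  have "(A * B) $$ (r,c) = (\<Sum>l<N. A $$ (r,l) * B $$ (l,c))"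
    using assms(1-4) by (simp add: scalar_prod_def lessThan_atLeast0)
  also have "\<dots> = (\<Sum>l<m. A $$ (r,l) * B $$ (l,c))"
    by (rule sum.mono_neutral_right) (use assms(5,6) in auto)
  finally show ?thesis .
qed

lemma invertible_mat_obtain_inverse:
  assumes "A \<in> carrier_mat N N" "invertible_mat A"
  obtains B where "B \<in> carrier_mat N N" "A * B = 1\<^sub>m N" "B * A = 1\<^sub>m N"
proof -
  from assms obtain B where AB: "A * B = 1\<^sub>m N" and BA: "B * A = 1\<^sub>m (dim_row B)"
    unfolding invertible_mat_def inverts_mat_def by auto
  have "dim_row B = N"
    using arg_cong[OF BA, of dim_col] assms(1) by simp
  moreover have "dim_col B = N"
    using arg_cong[OF AB, of dim_col] by simp
  ultimately show ?thesis
    using that AB BA by auto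
qed

lemma invertible_mat_row_nonzero:
  assumes "A \<in> carrier_mat N N" "invertible_mat A" "r < N"
  shows "\<exists>c<N. A $$ (r,c) \<noteq> 0"
proof (rule ccontr)
  assume zero: "\<not> (\<exists>c<N. A $$ (r,c) \<noteq> 0)"
  obtain B where B: "B \<in> carrier_mat N N" "A * B = 1\<^sub>m N"
    using invertible_mat_obtain_inverse[OF assms(1,2)] by metis
  have "(A * B) $$ (r,r) = (\<Sum>l\<in>{0..<N}. A $$ (r,l) * B $$ (l,r))"
    using assms(1,3) B(1) by (simp add: scalar_prod_def)
  also have "\<dots> = 0"
    using zero by simp
  finally show False
    using B(2) assms(3) by simp
qed

lemma invertible_mat_col_nonzero:
  assumes "A \<in> carrier_mat N N" "invertible_mat A" "c < N"
  shows "\<exists>r<N. A $$ (r,c) \<noteq> 0"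
proof (rule ccontr)
  assume zero: "\<not> (\<exists>r<N. A $$ (r,c) \<noteq> 0)"
  obtain B where B: "B \<in> carrier_mat N N" "B * A = 1\<^sub>m N"
    using invertible_mat_obtain_inverse[OF assms(1,2)] by metis
  have "(B * A) $$ (c,c) = (\<Sum>l\<in>{0..<N}. B $$ (c,l) * A $$ (l,c))"
    using assms(1,3) B(1) by (simp add: scalar_prod_def)
  also have "\<dots> = 0"
    using zero by simp
  finally show False
    using B(2) assms(3) by simp
qed

lemma local_mat_carrier: "local_mat n M i \<in> carrier_mat (n+1) (n+1)"
  by (simp add: local_mat_def)

lemma index_local_mat:
  "r < n+1 \<Longrightarrow> c < n+1 \<Longrightarrow> local_mat n M i $$ (r,c) =
     (if i - 1 \<le> r \<and> r \<le> i + 1 \<and> i - 1 \<le> c \<and> c \<le> i + 1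
      then M $$ (r - (i - 1), c - (i - 1))
      else if r = c then 1 else 0)"
  by (simp add: local_mat_def)

lemma local_mat_outside_block:
  "r < n+1 \<Longrightarrow> c < n+1 \<Longrightarrow> r \<noteq> c \<Longrightarrow> i + 1 < r \<or> i + 1 < c \<Longrightarrow> local_mat n M i $$ (r,c) = 0"
  by (auto simp: index_local_mat)

lemma local_mat_one: "local_mat n (1\<^sub>m 3) i = 1\<^sub>m (n+1)"
  by (rule eq_matI) (auto simp: local_mat_def)

lemma index_mult_local_mat_left:
  assumes "B \<in> carrier_mat (n+1) nc" "r < m" "c < nc" "i + 2 \<le> m" "m \<le> n+1"
  shows "(local_mat n M i * B) $$ (r,c) = (\<Sum>l<m. local_mat n M i $$ (r,l) * B $$ (l,c))"
  by (rule index_mult_mat_truncated[OF local_mat_carrier assms(1)])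
    (use assms in \<open>auto simp: local_mat_outside_block\<close>)

lemma index_mult_local_mat_right:
  assumes "A \<in> carrier_mat nr (n+1)" "r < nr" "c < m" "j + 2 \<le> m" "m \<le> n+1"
  shows "(A * local_mat n M j) $$ (r,c) = (\<Sum>l<m. A $$ (r,l) * local_mat n M j $$ (l,c))"
  by (rule index_mult_mat_truncated[OF assms(1) local_mat_carrier])
    (use assms in \<open>auto simp: local_mat_outside_block\<close>)

lemma index_local_mat_first_block:
  "n \<ge> 2 \<Longrightarrow> r < 3 \<Longrightarrow> c < 3 \<Longrightarrow> local_mat n M 1 $$ (r,c) = M $$ (r,c)"
  by (simp add: index_local_mat)

lemma invertible_local_mat_block_row_nonzero:
  assumes "n \<ge> 2" "invertible_mat (local_mat n M 1)" "r < 3"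
  shows "M $$ (r,0) \<noteq> 0 \<or> M $$ (r,1) \<noteq> 0 \<or> M $$ (r,2) \<noteq> 0"
proof -
  obtain c where c: "c < n+1" "local_mat n M 1 $$ (r,c) \<noteq> 0"
    using invertible_mat_row_nonzero[OF local_mat_carrier assms(2), of r] assms(1,3) by auto
  then have "c < 3"
    using assms(3) local_mat_outside_block[of r n c 1 M] by fastforce
  moreover from this have "M $$ (r,c) \<noteq> 0"
    using c(2) index_local_mat_first_block[OF assms(1,3)] by simp
  ultimately show ?thesis
    by (metis One_nat_def Suc_1 less_Suc_eq less_one numeral_3_eq_3)
qed

lemma invertible_local_mat_block_col_nonzero:
  assumes "n \<ge> 2" "invertible_mat (local_mat n M 1)" "c < 3"
  shows "M $$ (0,c) \<noteq> 0 \<or> M $$ (1,c) \<noteq> 0 \<or> M $$ (2,c) \<noteq> 0"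
proof -
  obtain r where r: "r < n+1" "local_mat n M 1 $$ (r,c) \<noteq> 0"
    using invertible_mat_col_nonzero[OF local_mat_carrier assms(2), of c] assms(1,3) by auto
  then have "r < 3"
    using assms(3) local_mat_outside_block[of r n c 1 M] by fastforce
  moreover from this have "M $$ (r,c) \<noteq> 0"
    using r(2) index_local_mat_first_block[OF assms(1) _ assms(3)] by simp
  ultimately show ?thesis
    by (metis One_nat_def Suc_1 less_Suc_eq less_one numeral_3_eq_3)
qed

lemma far_commuting_local_mats_block_eqs:
  fixes M :: "complex mat"
  assumes "n \<ge> 4"
    and M: "M = mat3 m11 m12 m13 m21 m22 m23 m31 m32 m33"
    and comm: "local_mat n M 1 * local_mat n M 3 = local_mat n M 3 * local_mat n M 1"
  shows "m13 = 0" "m31 = 0" "m23 * (m11 - 1) = 0" "m23 * m12 = 0" "m21 * m32 = 0"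
    "m21 * (m33 - 1) = 0" "(m11 - 1) * m32 = 0"
proof -
  have entry: "(\<Sum>l<5. local_mat n M 1 $$ (r,l) * local_mat n M 3 $$ (l,c)) =
      (\<Sum>l<5. local_mat n M 3 $$ (r,l) * local_mat n M 1 $$ (l,c))" if "r < 5" "c < 5" for r c
    using arg_cong[OF comm, of "\<lambda>A. A $$ (r,c)"] that assms(1)
      index_mult_local_mat_left[OF local_mat_carrier, of r 5 c n 1 M M 3]
      index_mult_local_mat_left[OF local_mat_carrier, of r 5 c n 3 M M 1]
    by simp
  note eval = M index_local_mat eval_nat_numeral mat_of_rows_list_def
  show m13: "m13 = 0"
    using entry[of 0 4] assms(1) by (simp add: eval)
  show m31: "m31 = 0"
    using entry[of 4 0] assms(1) by (simp add: eval)
  show "m23 * (m11 - 1) = 0"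
    using entry[of 1 2] assms(1) by (simp add: eval m13 m31 algebra_simps)
  show "m23 * m12 = 0"
    using entry[of 1 3] assms(1) by (simp add: eval m13 m31 algebra_simps)
  show "m21 * m32 = 0"
    using entry[of 3 1] assms(1) by (simp add: eval m13 m31 algebra_simps)
  show "m21 * (m33 - 1) = 0"
    using entry[of 3 2] assms(1) by (simp add: eval m13 m31 algebra_simps)
  show "(m11 - 1) * m32 = 0"
    using entry[of 2 1] assms(1) by (simp add: eval m13 m31 algebra_simps)
qed

lemma index_braid_word_local_mat:
  assumes "n \<ge> 3" "r < 4" "c < 4" "i \<le> 2" "j \<le> 2"
  shows "(local_mat n M i * local_mat n M j * local_mat n M i) $$ (r,c) =
    (\<Sum>k<4. (\<Sum>l<4. local_mat n M i $$ (r,l) * local_mat n M j $$ (l,k)) * local_mat n M i $$ (k,c))"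
proof -
  have "(local_mat n M i * local_mat n M j * local_mat n M i) $$ (r,c) =
      (\<Sum>k<4. (local_mat n M i * local_mat n M j) $$ (r,k) * local_mat n M i $$ (k,c))"
    by (rule index_mult_local_mat_right[OF mult_carrier_mat[OF local_mat_carrier local_mat_carrier]])
      (use assms in auto)
  also have "\<dots> = (\<Sum>k<4. (\<Sum>l<4. local_mat n M i $$ (r,l) * local_mat n M j $$ (l,k)) * local_mat n M i $$ (k,c))"
    using assms by (intro sum.cong refl arg_cong2[where f = times] index_mult_local_mat_left[OF local_mat_carrier]) auto
  finally show ?thesis .
qed

lemma braid_local_mats_block_eqs:
  fixes M :: "complex mat"
  assumes "n \<ge> 3"
    and M: "M = mat3 m11 m12 0 m21 m22 m23 0 m32 m33"
    and braid: "local_mat n M 1 * local_mat n M 2 * local_mat n M 1 =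
                local_mat n M 2 * local_mat n M 1 * local_mat n M 2"
  shows "m11 * (m11 + m12 * m21 - 1) = 0"
    "m12 * (m11 * m22 + m12 * m32) = 0"
    "m21 * (m11 * m22 + m21 * m23) = 0"
    "m12*m21 + m11*m22*m22 + m21*m22*m23 + m12*m22*m32 + m22*m23*m32 =
       m11*m11*m22 + m11*m12*m32 + m11*m21*m23 + m12*m21*m33"
    "m11*m23*m32 + m21*m23*m33 + m12*m32*m33 + m22*m33*m33 =
       m12*m21*m22 + m12*m22*m32 + m21*m22*m23 + m22*m22*m33 + m23*m32"
    "m23 * (m21 * m23 + m22 * m33) = 0"
    "m32 * (m12 * m32 + m22 * m33) = 0"
    "m33 * (m23 * m32 + m33 - 1) = 0"
proof -
  have entry: "(\<Sum>k<4. (\<Sum>l<4. local_mat n M 1 $$ (r,l) * local_mat n M 2 $$ (l,k)) * local_mat n M 1 $$ (k,c)) =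
      (\<Sum>k<4. (\<Sum>l<4. local_mat n M 2 $$ (r,l) * local_mat n M 1 $$ (l,k)) * local_mat n M 2 $$ (k,c))"
    if "r < 4" "c < 4" for r c
    using arg_cong[OF braid, of "\<lambda>A. A $$ (r,c)"] that assms(1)
    by (simp add: index_braid_word_local_mat)
  note eval = M index_local_mat eval_nat_numeral mat_of_rows_list_def algebra_simps
  show "m11 * (m11 + m12 * m21 - 1) = 0"
    using entry[of 0 0] assms(1) by (simp add: eval)
  show "m12 * (m11 * m22 + m12 * m32) = 0"
    using entry[of 0 1] assms(1) by (simp add: eval)
  show "m21 * (m11 * m22 + m21 * m23) = 0"
    using entry[of 1 0] assms(1) by (simp add: eval)
  show "m12*m21 + m11*m22*m22 + m21*m22*m23 + m12*m22*m32 + m22*m23*m32 =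
      m11*m11*m22 + m11*m12*m32 + m11*m21*m23 + m12*m21*m33"
    using entry[of 1 1] assms(1) by (simp add: eval)
  show "m11*m23*m32 + m21*m23*m33 + m12*m32*m33 + m22*m33*m33 =
      m12*m21*m22 + m12*m22*m32 + m21*m22*m23 + m22*m22*m33 + m23*m32"
    using entry[of 2 2] assms(1) by (simp add: eval)
  show "m23 * (m21 * m23 + m22 * m33) = 0"
    using entry[of 2 3] assms(1) by (simp add: eval)
  show "m32 * (m12 * m32 + m22 * m33) = 0"
    using entry[of 3 2] assms(1) by (simp add: eval)
  show "m33 * (m23 * m32 + m33 - 1) = 0"
    using entry[of 3 3] assms(1) by (simp add: eval)
qed

lemma standard_blocksI:
  "m22 \<noteq> 1 \<Longrightarrow> m23 \<noteq> 0 \<Longrightarrow> M1 m22 m23 \<in> standard_blocks"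
  "m22 \<noteq> 1 \<Longrightarrow> m12 \<noteq> 0 \<Longrightarrow> M2 m22 m12 \<in> standard_blocks"
  "m22 * m32 \<noteq> 0 \<Longrightarrow> M3 m22 m32 \<in> standard_blocks"
  "m23 * m22 \<noteq> 0 \<Longrightarrow> M4 m22 m23 \<in> standard_blocks"
  "m23 * m32 \<noteq> 0 \<Longrightarrow> M5 m23 m32 \<in> standard_blocks"
  "m12 * m21 \<noteq> 0 \<Longrightarrow> M6 m12 m21 \<in> standard_blocks"
  "m23 * m32 \<noteq> 0 \<Longrightarrow> M7 m23 m32 \<in> standard_blocks"
  "m12 * m21 \<noteq> 0 \<Longrightarrow> M8 m12 m21 \<in> standard_blocks"
  by (auto simp: standard_blocks_def)

lemma standard_block_case_M4:
  fixes m11 m12 m21 m22 m23 m32 m33 :: complex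
  assumes "m23 \<noteq> 0" "m21 \<noteq> 0"
    and "m23 * (m11 - 1) = 0" "m23 * m12 = 0" "m21 * m32 = 0" "m21 * (m33 - 1) = 0"
    and "m21 * (m11 * m22 + m21 * m23) = 0"
    and "m12 \<noteq> 0 \<or> m22 \<noteq> 0 \<or> m32 \<noteq> 0"
  shows "mat3 m11 m12 0 m21 m22 m23 0 m32 m33 \<in> standard_blocks"
proof -
  have m11: "m11 = 1" and m12: "m12 = 0" and m32: "m32 = 0" and m33: "m33 = 1"
    using assms(1-6) by auto
  then have "m22 \<noteq> 0" and "m22 + m21 * m23 = 0"
    using assms(2,7,8) by auto
  then have "m21 = - (m22 / m23)" and "m23 * m22 \<noteq> 0"
    using assms(1) by (simp_all add: field_simps eq_neg_iff_add_eq_0)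
  then show ?thesis
    using standard_blocksI(4)[of m23 m22] by (simp add: M4_def m11 m12 m32 m33)
qed

lemma standard_block_cases_M1_M5_M7:
  fixes m11 m12 m21 m22 m23 m32 m33 :: complex
  assumes "m23 \<noteq> 0" "m21 = 0"
    and "m23 * (m11 - 1) = 0" "m23 * m12 = 0"
    and "m12*m21 + m11*m22*m22 + m21*m22*m23 + m12*m22*m32 + m22*m23*m32 =
           m11*m11*m22 + m11*m12*m32 + m11*m21*m23 + m12*m21*m33"
    and "m23 * (m21 * m23 + m22 * m33) = 0" "m33 * (m23 * m32 + m33 - 1) = 0"
    and "m32 \<noteq> 0 \<or> m33 \<noteq> 0" "m12 \<noteq> 0 \<or> m22 \<noteq> 0 \<or> m32 \<noteq> 0"
  shows "mat3 m11 m12 0 m21 m22 m23 0 m32 m33 \<in> standard_blocks"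
proof -
  have m11: "m11 = 1" and m12: "m12 = 0"
    using assms(1,3,4) by auto
  have "m22 * m33 = 0" and "m22 * (m22 + m23 * m32 - 1) = 0"
    using assms(1,2,5,6) m11 m12 by (simp_all add: algebra_simps)
  show ?thesis
  proof (cases "m22 = 0")
    case m22: True
    then have "m32 \<noteq> 0"
      using assms(9) m12 by simp
    have "m33 = 0 \<or> m23 * m32 + m33 - 1 = 0"
      using assms(7) by simp
    then consider "m33 = 0" | "m33 = 1 - m23 * m32"
      by (auto simp: algebra_simps)
    then show ?thesis
    proof cases
      case 1
      then show ?thesis
        using standard_blocksI(7)[of m23 m32] assms(1,2) \<open>m32 \<noteq> 0\<close> by (simp add: M7_def m11 m12 m22)
    next
      case 2
      then show ?thesis
        using standard_blocksI(5)[of m23 m32] assms(1,2) \<open>m32 \<noteq> 0\<close> by (simp add: M5_def m11 m12 m22)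
    qed
  next
    case False
    then have "m33 = 0" and "m22 + m23 * m32 - 1 = 0"
      using \<open>m22 * m33 = 0\<close> \<open>m22 * (m22 + m23 * m32 - 1) = 0\<close> by simp_all
    moreover from this have "m32 \<noteq> 0"
      using assms(8) by simp
    ultimately have "m32 = (1 - m22) / m23" and "m22 \<noteq> 1"
      using assms(1) by (auto simp: field_simps)
    then show ?thesis
      using standard_blocksI(1)[of m22 m23] assms(1,2) \<open>m33 = 0\<close> by (simp add: M1_def m11 m12)
  qed
qed

lemma standard_block_case_M3:
  fixes m11 m12 m21 m22 m23 m32 m33 :: complex
  assumes "m23 = 0" "m32 \<noteq> 0"
    and "m21 * m32 = 0" "(m11 - 1) * m32 = 0"
    and "m32 * (m12 * m32 + m22 * m33) = 0" "m33 * (m23 * m32 + m33 - 1) = 0"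
    and "m21 \<noteq> 0 \<or> m22 \<noteq> 0 \<or> m23 \<noteq> 0" "m23 \<noteq> 0 \<or> m33 \<noteq> 0"
  shows "mat3 m11 m12 0 m21 m22 m23 0 m32 m33 \<in> standard_blocks"
proof -
  have m21: "m21 = 0" and m11: "m11 = 1" and m33: "m33 = 1"
    using assms(1-4,6,8) by auto
  then have m22: "m22 \<noteq> 0" and "m12 * m32 + m22 = 0"
    using assms(1,2,5,7) by auto
  then have "m12 = - (m22 / m32)"
    using assms(2) by (simp add: field_simps eq_neg_iff_add_eq_0)
  then show ?thesis
    using standard_blocksI(3)[of m22 m32] assms(1,2) m22 by (simp add: M3_def m11 m21 m33)
qed

lemma standard_block_cases_M2_M8:
  fixes m12 m21 m22 m33 :: complex
  assumes "m33 = 1"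
    and "m22 * (m12 * m21 + m22 - 1) = 0"
    and "m12 \<noteq> 0" "m21 \<noteq> 0"
  shows "mat3 0 m12 0 m21 m22 0 0 0 m33 \<in> standard_blocks"
proof -
  have "m22 = 0 \<or> m12 * m21 + m22 - 1 = 0"
    using assms(2) by simp
  then consider "m22 = 0" | "m22 = 1 - m12 * m21"
    by (auto simp: algebra_simps)
  then show ?thesis
  proof cases
    case 1
    then show ?thesis
      using standard_blocksI(8)[of m12 m21] assms by (simp add: M8_def)
  next
    case 2
    then have "m21 = (1 - m22) / m12" "m22 \<noteq> 1"
      using assms(3,4) by (auto simp: field_simps)
    then show ?thesis
      using standard_blocksI(2)[of m22 m12] assms by (simp add: M2_def)
  qed
qed

lemma standard_block_case_M6:
  fixes m11 m12 m21 m22 m33 :: complex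
  assumes "m11 \<noteq> 0" "m33 = 1"
    and "m11 * (m11 + m12 * m21 - 1) = 0"
    and "m12 * (m11 * m22) = 0" "m21 * (m11 * m22) = 0"
    and "m22 * (m12 * m21 + m22 - 1) = 0"
    and "m21 \<noteq> 0 \<or> m22 \<noteq> 0" "m12 \<noteq> 0 \<or> m22 \<noteq> 0"
    and "mat3 m11 m12 0 m21 m22 0 0 0 m33 \<noteq> 1\<^sub>m 3"
  shows "mat3 m11 m12 0 m21 m22 0 0 0 m33 \<in> standard_blocks"
proof (cases "m22 = 0")
  case True
  have "m11 + m12 * m21 - 1 = 0"
    using assms(1,3) by simp
  moreover have "m12 \<noteq> 0" "m21 \<noteq> 0"
    using assms(7,8) True by auto
  ultimately have "m11 = 1 - m12 * m21" "m12 * m21 \<noteq> 0"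
    by (simp_all add: algebra_simps)
  then show ?thesis
    using standard_blocksI(6)[of m12 m21] by (simp add: M6_def True assms(2))
next
  case False
  then have "m12 = 0" "m21 = 0"
    using assms(1,4,5) by auto
  then have "m11 = 1" "m22 = 1"
    using assms(1,3,6) False by auto
  then show ?thesis
    using assms(2,9) \<open>m12 = 0\<close> \<open>m21 = 0\<close> mat3_one[where 'a = complex] by simp
qed

lemma standard_block_if_block_relations:
  fixes m11 m12 m21 m22 m23 m32 m33 :: complex
  assumes far: "m23 * (m11 - 1) = 0" "m23 * m12 = 0" "m21 * m32 = 0" "m21 * (m33 - 1) = 0"
      "(m11 - 1) * m32 = 0"
    and braid: "m11 * (m11 + m12 * m21 - 1) = 0"
      "m12 * (m11 * m22 + m12 * m32) = 0"
      "m21 * (m11 * m22 + m21 * m23) = 0"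
      "m12*m21 + m11*m22*m22 + m21*m22*m23 + m12*m22*m32 + m22*m23*m32 =
         m11*m11*m22 + m11*m12*m32 + m11*m21*m23 + m12*m21*m33"
      "m11*m23*m32 + m21*m23*m33 + m12*m32*m33 + m22*m33*m33 =
         m12*m21*m22 + m12*m22*m32 + m21*m22*m23 + m22*m22*m33 + m23*m32"
      "m23 * (m21 * m23 + m22 * m33) = 0"
      "m32 * (m12 * m32 + m22 * m33) = 0"
      "m33 * (m23 * m32 + m33 - 1) = 0"
    and rows: "m11 \<noteq> 0 \<or> m12 \<noteq> 0" "m21 \<noteq> 0 \<or> m22 \<noteq> 0 \<or> m23 \<noteq> 0" "m32 \<noteq> 0 \<or> m33 \<noteq> 0"
    and cols: "m11 \<noteq> 0 \<or> m21 \<noteq> 0" "m12 \<noteq> 0 \<or> m22 \<noteq> 0 \<or> m32 \<noteq> 0" "m23 \<noteq> 0 \<or> m33 \<noteq> 0"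
    and nonid: "mat3 m11 m12 0 m21 m22 m23 0 m32 m33 \<noteq> 1\<^sub>m 3"
  shows "mat3 m11 m12 0 m21 m22 m23 0 m32 m33 \<in> standard_blocks"
proof -
  consider "m23 \<noteq> 0" "m21 \<noteq> 0" | "m23 \<noteq> 0" "m21 = 0" | "m23 = 0" "m32 \<noteq> 0"
    | "m23 = 0" "m32 = 0" "m11 = 0" | "m23 = 0" "m32 = 0" "m11 \<noteq> 0"
    by blast
  then show ?thesis
  proof cases
    case 1
    then show ?thesis using standard_block_case_M4 far braid(3) cols(2) by blast
  next
    case 2
    then show ?thesis using standard_block_cases_M1_M5_M7 far braid(4,6,8) rows(3) cols(2) by blast
  next
    case 3
    then show ?thesis using standard_block_case_M3 far braid(7,8) rows(2) cols(3) by blast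
  next
    case 4
    moreover have "m33 = 1" "m22 * (m12 * m21 + m22 - 1) = 0"
      using 4 braid(5,8) rows(3) by (auto simp: algebra_simps)
    ultimately show ?thesis using standard_block_cases_M2_M8 rows(1) cols(1) by simp
  next
    case 5
    moreover have "m33 = 1" "m22 * (m12 * m21 + m22 - 1) = 0"
      using 5 braid(5,8) rows(3) by (auto simp: algebra_simps)
    ultimately show ?thesis
      using standard_block_case_M6 braid(1-3) rows(2) cols(2) nonid by (simp add: mult.assoc)
  qed
qed

lemma standard_block_if_local_braid_relations:
  assumes "n \<ge> 4" "M \<in> carrier_mat 3 3" "M \<noteq> 1\<^sub>m 3"
    and comm: "local_mat n M 1 * local_mat n M 3 = local_mat n M 3 * local_mat n M 1"
    and braid: "local_mat n M 1 * local_mat n M 2 * local_mat n M 1 =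
                local_mat n M 2 * local_mat n M 1 * local_mat n M 2"
    and inv: "invertible_mat (local_mat n M 1)"
  shows "M \<in> standard_blocks"
proof -
  obtain m11 m12 m13 m21 m22 m23 m31 m32 m33
    where M0: "M = mat3 m11 m12 m13 m21 m22 m23 m31 m32 m33"
    using carrier_mat_3_3_cases[OF assms(2)] .
  note far = far_commuting_local_mats_block_eqs[OF assms(1) M0 comm]
  have M: "M = mat3 m11 m12 0 m21 m22 m23 0 m32 m33"
    using M0 far(1,2) by simp
  have n2: "n \<ge> 2" and n3: "n \<ge> 3"
    using assms(1) by simp_all
  note near = braid_local_mats_block_eqs[OF n3 M braid]
  have rows: "m11 \<noteq> 0 \<or> m12 \<noteq> 0" "m21 \<noteq> 0 \<or> m22 \<noteq> 0 \<or> m23 \<noteq> 0" "m32 \<noteq> 0 \<or> m33 \<noteq> 0"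
    using invertible_local_mat_block_row_nonzero[OF n2 inv, of 0]
      invertible_local_mat_block_row_nonzero[OF n2 inv, of 1]
      invertible_local_mat_block_row_nonzero[OF n2 inv, of 2]
    by (simp_all add: M mat_of_rows_list_def)
  have cols: "m11 \<noteq> 0 \<or> m21 \<noteq> 0" "m12 \<noteq> 0 \<or> m22 \<noteq> 0 \<or> m32 \<noteq> 0" "m23 \<noteq> 0 \<or> m33 \<noteq> 0"
    using invertible_local_mat_block_col_nonzero[OF n2 inv, of 0]
      invertible_local_mat_block_col_nonzero[OF n2 inv, of 1]
      invertible_local_mat_block_col_nonzero[OF n2 inv, of 2]
    by (simp_all add: M mat_of_rows_list_def)
  show ?thesis
    using standard_block_if_block_relations[OF far(3-7) near rows cols] assms(3) by (simp add: M)
qed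

lemma equiv_rep_if_eq_on_generators:
  assumes "\<And>i. i \<in> {1..n-1} \<Longrightarrow> mu i = nu i"
    and "\<And>i. i \<in> {1..n-1} \<Longrightarrow> nu i \<in> carrier_mat (n+1) (n+1)"
  shows "equiv_rep n nu mu"
proof -
  have "mu i = 1\<^sub>m (n+1) * nu i * 1\<^sub>m (n+1)" if "i \<in> {1..n-1}" for i
    using assms[OF that] by simp
  then show ?thesis
    unfolding equiv_rep_def by (intro exI[of _ "1\<^sub>m (n+1)"]) auto
qed

theorem theorem4p1:
  fixes n :: nat and nu :: "nat \<Rightarrow> complex mat"
  assumes "n \<ge> 4"
    and "braid_rep n nu"
    and "homogeneous_3_local n nu"
    and "nontrivial_rep n nu"
  shows "\<exists>Mj \<in> standard_blocks. equiv_rep n nu (\<lambda>i. local_mat n Mj i)"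
proof -
  obtain M where M: "M \<in> carrier_mat 3 3" and nu: "\<And>i. i \<in> {1..n-1} \<Longrightarrow> nu i = local_mat n M i"
    using assms(3) unfolding homogeneous_3_local_def by blast
  have gens: "1 \<in> {1..n-1}" "2 \<in> {1..n-1}" "3 \<in> {1..n-1}" "1 \<in> {1..n-2}"
    using assms(1) by auto
  have "local_mat n M 1 * local_mat n M 3 = local_mat n M 3 * local_mat n M 1"
    and "local_mat n M 1 * local_mat n M 2 * local_mat n M 1 =
         local_mat n M 2 * local_mat n M 1 * local_mat n M 2"
    and "invertible_mat (local_mat n M 1)"
    using assms(2) gens unfolding braid_rep_def nu[symmetric, OF gens(1)]
      nu[symmetric, OF gens(2)] nu[symmetric, OF gens(3)] by (fastforce simp: numeral_2_eq_2)+
  moreover have "M \<noteq> 1\<^sub>m 3"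
    using assms(4) nu local_mat_one unfolding nontrivial_rep_def by auto
  ultimately have "M \<in> standard_blocks"
    using standard_block_if_local_braid_relations assms(1) M by blast
  moreover have "equiv_rep n nu (\<lambda>i. local_mat n M i)"
    using nu local_mat_carrier by (intro equiv_rep_if_eq_on_generators) metis+
  ultimately show ?thesis
    by blast
qed

end
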